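(* Let $X$ be a finite set and let $\tau$ be a slim collection of subsets of $X$, each of size at least 3. Then the collection $\mathcal{P}$ of all non-empty subsets $\tau'\subseteq\tau$ with ${\rm exc}'(\tau')=0$ is a patchwork: whenever $\tau_1,\tau_2\in\mathcal{P}$ and $\tau_1\cap\tau_2\neq\emptyset$, both $\tau_1\cap\tau_2$ and $\tau_1\cup\tau_2$ belong to $\mathcal{P}$.
   Context: $L(\tau)=\bigcup_{s\in\tau}s$. For a non-empty collection $\tau'$ of subsets of $X$ each of size at least 3, ${\rm exc}'(\tau')=|L(\tau')|-2-\sum_{s\in\tau'}(|s|-2)$. $\tau$ is slim if ${\rm exc}'(\tau')\ge0$ for every non-empty $\tau'\subseteq\tau$. *)

theory Defs
  imports Main
begin

definition L :: "'a set set \<Rightarrow> 'a set" where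
  "L \<tau> = \<Union>\<tau>"

definition exc' :: "'a set set \<Rightarrow> int" where
  "exc' \<tau>' = int (card (L \<tau>')) - 2 - (\<Sum>s\<in>\<tau>'. int (card s) - 2)"

definition slim :: "'a set set \<Rightarrow> bool" where
  "slim \<tau> \<longleftrightarrow> (\<forall>\<tau>'. \<tau>' \<subseteq> \<tau> \<and> \<tau>' \<noteq> {} \<longrightarrow> exc' \<tau>' \<ge> 0)"

definition patchwork :: "'b set set \<Rightarrow> bool" where
  "patchwork P \<longleftrightarrow> (\<forall>t1\<in>P. \<forall>t2\<in>P. t1 \<inter> t2 \<noteq> {} \<longrightarrow> t1 \<inter> t2 \<in> P \<and> t1 \<union> t2 \<in> P)"

end

theory Submission
  imports Defs
begin

(* The excess is submodular: the union term satisfies L (A \<union> B) = L A \<union> L B and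
   L (A \<inter> B) \<subseteq> L A \<inter> L B, while the sum term is modular. On a slim collection the
   excess is nonnegative on nonempty subcollections, so for tight A, B meeting each
   other 0 \<le> exc' (A \<union> B) + exc' (A \<inter> B) \<le> exc' A + exc' B = 0 forces both to be tight. *)

lemma L_Un: "L (A \<union> B) = L A \<union> L B"
  unfolding L_def by auto

lemma L_Int_subset: "L (A \<inter> B) \<subseteq> L A \<inter> L B"
  unfolding L_def by auto

lemma L_mono: "A \<subseteq> B \<Longrightarrow> L A \<subseteq> L B"
  unfolding L_def by auto

lemma finite_if_finite_L:
  assumes "finite (L A)"
  shows "finite A"
proof -
  have "A \<subseteq> Pow (L A)"
    unfolding L_def by auto
  then show ?thesis
    using assms finite_subset by blast
qed

lemma exc'_submodular:
  assumes "finite (L (A \<union> B))"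
  shows "exc' (A \<union> B) + exc' (A \<inter> B) \<le> exc' A + exc' B"
proof -
  have fin_LA: "finite (L A)" and fin_LB: "finite (L B)"
    using assms by (simp_all add: L_Un)
  have "card (L A \<union> L B) + card (L (A \<inter> B)) \<le> card (L A) + card (L B)"
    using card_Un_Int[OF fin_LA fin_LB] card_mono[OF _ L_Int_subset] fin_LA by fastforce
  then have card_ineq: "int (card (L (A \<union> B))) + int (card (L (A \<inter> B)))
      \<le> int (card (L A)) + int (card (L B))"
    unfolding L_Un by linarith
  have "(\<Sum>s\<in>A \<union> B. int (card s) - 2) + (\<Sum>s\<in>A \<inter> B. int (card s) - 2)
      = (\<Sum>s\<in>A. int (card s) - 2) + (\<Sum>s\<in>B. int (card s) - 2)"
    using sum.union_inter[OF finite_if_finite_L[OF fin_LA] finite_if_finite_L[OF fin_LB]] .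
  with card_ineq show ?thesis
    unfolding exc'_def by linarith
qed

lemma patchwork_tight_subcollections:
  assumes "finite (L \<tau>)" and "slim \<tau>"
  shows "patchwork {\<tau>'. \<tau>' \<subseteq> \<tau> \<and> \<tau>' \<noteq> {} \<and> exc' \<tau>' = 0}"
  unfolding patchwork_def
proof (intro ballI impI)
  fix A B
  assume A: "A \<in> {\<tau>'. \<tau>' \<subseteq> \<tau> \<and> \<tau>' \<noteq> {} \<and> exc' \<tau>' = 0}"
    and B: "B \<in> {\<tau>'. \<tau>' \<subseteq> \<tau> \<and> \<tau>' \<noteq> {} \<and> exc' \<tau>' = 0}"
    and meet: "A \<inter> B \<noteq> {}"
  have nonneg: "\<And>C. C \<subseteq> \<tau> \<Longrightarrow> C \<noteq> {} \<Longrightarrow> exc' C \<ge> 0"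
    using assms(2) unfolding slim_def by blast
  have "L (A \<union> B) \<subseteq> L \<tau>"
    using A B by (intro L_mono) auto
  then have "finite (L (A \<union> B))"
    using assms(1) finite_subset by blast
  then have "exc' (A \<union> B) + exc' (A \<inter> B) \<le> 0"
    using exc'_submodular A B by fastforce
  moreover have "exc' (A \<union> B) \<ge> 0" "exc' (A \<inter> B) \<ge> 0"
    using nonneg[of "A \<union> B"] nonneg[of "A \<inter> B"] A B meet by auto
  ultimately have "exc' (A \<union> B) = 0" "exc' (A \<inter> B) = 0"
    by linarith+
  then show "A \<inter> B \<in> {\<tau>'. \<tau>' \<subseteq> \<tau> \<and> \<tau>' \<noteq> {} \<and> exc' \<tau>' = 0} \<and>
      A \<union> B \<in> {\<tau>'. \<tau>' \<subseteq> \<tau> \<and> \<tau>' \<noteq> {} \<and> exc' \<tau>' = 0}"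
    using A B meet by auto
qed

theorem corollary3:
  fixes X :: "'a set" and \<tau> :: "'a set set"
  assumes "finite X"
    and "\<forall>s\<in>\<tau>. s \<subseteq> X \<and> card s \<ge> 3"
    and "slim \<tau>"
  shows "patchwork {\<tau>'. \<tau>' \<subseteq> \<tau> \<and> \<tau>' \<noteq> {} \<and> exc' \<tau>' = 0}"
proof -
  have "L \<tau> \<subseteq> X"
    using assms(2) unfolding L_def by auto
  then have "finite (L \<tau>)"
    using assms(1) finite_subset by blast
  then show ?thesis
    using assms(3) patchwork_tight_subcollections by blast
qed

end
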